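(* Let $\|\cdot\|$ be a norm on $\mathbb{R}^{m\times d}$ with dual norm $\|U\|_\star=\sup_{\|D\|\le1}\langle U,D\rangle_F$, and let $C>0$ be a constant such that $\|\Delta\|_{1\to2}^2\le C\|\Delta\|^2$ for all $\Delta\in\mathbb{R}^{m\times d}$ (one may take $C=1$ when $\|\cdot\|=\|\cdot\|_{1\to2}$). Let $X\in\mathbb{R}^{m\times n}$ and $D\in\mathbb{R}^{m\times d}$. For every $\epsilon>0$ the set $\mathfrak{A}_\epsilon(X,D)$ is non-empty, and for every $D'\in\mathbb{R}^{m\times d}$, $$F_X(D')\le F_X(D)+L_X(D)\,\|D'-D\|+C_X(D)\,\|D'-D\|^2,$$ where $$L_X(D)=\inf_{\epsilon>0}\sup_{A\in\mathfrak{A}_\epsilon(X,D)}\tfrac1n\|(X-DA)A^\top\|_\star,\qquad C_X(D)=\inf_{\epsilon>0}\sup_{A\in\mathfrak{A}_\epsilon(X,D)}\tfrac{C}{2n}\sum_{i=1}^n\|\alpha_i\|_1^2$$ (these quantities lie in $[0,+\infty]$; the inequality is trivial if one of them is infinite and $D'\neq D$).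
   Context: A penalty is a function $g:\mathbb{R}^d\to\mathbb{R}\cup\{+\infty\}$ with $g\ge0$, not identically $+\infty$. For $x\in\mathbb{R}^m$, $D\in\mathbb{R}^{m\times d}$, $\alpha\in\mathbb{R}^d$: $\mathcal{L}_x(D,\alpha)=\tfrac12\|x-D\alpha\|_2^2+g(\alpha)$, $f_x(D)=\inf_\alpha\mathcal{L}_x(D,\alpha)$. For $X=[x_1,\dots,x_n]$, $F_X(D)=\frac1n\sum_i f_{x_i}(D)$. $\|\Delta\|_{1\to2}=\max_j\|\delta_j\|_2$ for $\Delta=[\delta_1,\dots,\delta_d]$. For $\epsilon>0$, $\mathfrak{A}_\epsilon(X,D)=\{A=[\alpha_1,\dots,\alpha_n]\in\mathbb{R}^{d\times n}:\ \mathcal{L}_{x_i}(D,\alpha_i)\le f_{x_i}(D)+\epsilon\ \text{for all } i\}$. $\langle\cdot,\cdot\rangle_F$ is the Frobenius inner product. *)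

theory Defs
  imports "HOL-Analysis.Analysis"
begin

text \<open>Matrices in R^{m x d} are represented as real^'d^'m (rows indexed by 'm).
  The j-th column of a matrix M is  column j M.\<close>

definition is_matrix_norm :: "(real^'d^'m \<Rightarrow> real) \<Rightarrow> bool" where
  "is_matrix_norm N \<longleftrightarrow>
     (\<forall>M. N M = 0 \<longleftrightarrow> M = 0) \<and>
     (\<forall>c M. N (c *\<^sub>R M) = \<bar>c\<bar> * N M) \<and>
     (\<forall>M M'. N (M + M') \<le> N M + N M')"

definition frob_inner :: "real^'d^'m \<Rightarrow> real^'d^'m \<Rightarrow> real" where
  "frob_inner U D = (\<Sum>i\<in>UNIV. \<Sum>j\<in>UNIV. U $ i $ j * D $ i $ j)"

definition dual_norm :: "(real^'d^'m \<Rightarrow> real) \<Rightarrow> real^'d^'m \<Rightarrow> ereal" where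
  "dual_norm N U = (SUP D\<in>{D. N D \<le> 1}. ereal (frob_inner U D))"

definition norm_1to2 :: "real^'d^'m \<Rightarrow> real" where
  "norm_1to2 M = Max (range (\<lambda>j. norm (column j M)))"

definition l1norm :: "real^'d \<Rightarrow> real" where
  "l1norm a = (\<Sum>j\<in>UNIV. \<bar>a $ j\<bar>)"

definition is_penalty :: "(real^'d \<Rightarrow> ereal) \<Rightarrow> bool" where
  "is_penalty g \<longleftrightarrow> (\<forall>a. 0 \<le> g a \<and> g a \<noteq> -\<infinity>) \<and> (\<exists>a. g a \<noteq> \<infinity>)"

definition lossL :: "(real^'d \<Rightarrow> ereal) \<Rightarrow> real^'m \<Rightarrow> real^'d^'m \<Rightarrow> real^'d \<Rightarrow> ereal" where
  "lossL g x D a = ereal (1/2 * (norm (x - D *v a))\<^sup>2) + g a"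

definition f_loss :: "(real^'d \<Rightarrow> ereal) \<Rightarrow> real^'m \<Rightarrow> real^'d^'m \<Rightarrow> ereal" where
  "f_loss g x D = (INF a. lossL g x D a)"

definition F_loss :: "(real^'d \<Rightarrow> ereal) \<Rightarrow> real^'n^'m \<Rightarrow> real^'d^'m \<Rightarrow> ereal" where
  "F_loss g X D = ereal (1 / real CARD('n)) * (\<Sum>i\<in>UNIV. f_loss g (column i X) D)"

definition approx_set :: "(real^'d \<Rightarrow> ereal) \<Rightarrow> real \<Rightarrow> real^'n^'m \<Rightarrow> real^'d^'m \<Rightarrow> (real^'n^'d) set" where
  "approx_set g \<epsilon> X D = {A. \<forall>i. lossL g (column i X) D (column i A) \<le> f_loss g (column i X) D + ereal \<epsilon>}"

definition L_const :: "(real^'d^'m \<Rightarrow> real) \<Rightarrow> (real^'d \<Rightarrow> ereal) \<Rightarrow> real^'n^'m \<Rightarrow> real^'d^'m \<Rightarrow> ereal" where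
  "L_const N g X D = (INF \<epsilon>\<in>{0<..}. SUP A\<in>approx_set g \<epsilon> X D.
      ereal (1 / real CARD('n)) * dual_norm N ((X - D ** A) ** transpose A))"

definition C_const :: "real \<Rightarrow> (real^'d \<Rightarrow> ereal) \<Rightarrow> real^'n^'m \<Rightarrow> real^'d^'m \<Rightarrow> ereal" where
  "C_const C g X D = (INF \<epsilon>\<in>{0<..}. SUP A\<in>(approx_set g \<epsilon> X D :: (real^'n^'d) set).
      ereal (C / (2 * real CARD('n)) * (\<Sum>i\<in>UNIV. (l1norm (column i A))\<^sup>2)))"

end

theory Submission
  imports Defs
begin

text \<open>If the columns \<open>\<alpha>\<^sub>i\<close> of \<open>A\<close> are \<open>\<epsilon>\<close>-approximate minimisers at \<open>D\<close>, each \<open>\<alpha>\<^sub>i\<close> is still a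
  candidate at \<open>D'\<close>, and expanding the square gives
  \<open>f(x\<^sub>i, D') \<le> f(x\<^sub>i, D) + \<epsilon> - \<langle>x\<^sub>i - D \<alpha>\<^sub>i, (D' - D) \<alpha>\<^sub>i\<rangle> + 1/2 \<parallel>(D' - D) \<alpha>\<^sub>i\<parallel>\<^sup>2\<close>.
  Summed over \<open>i\<close>, the linear terms form the Frobenius pairing of \<open>(X - D A) A\<^sup>T\<close> with
  \<open>D - D'\<close>, which the dual norm controls, and \<open>\<parallel>(D' - D) \<alpha>\<parallel> \<le> \<parallel>D' - D\<parallel>\<^sub>1\<^sub>\<rightarrow>\<^sub>2 \<parallel>\<alpha>\<parallel>\<^sub>1\<close> controls the
  quadratic terms. It remains to take the supremum over \<open>A\<close> and the infimum over \<open>\<epsilon>\<close>: both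
  suprema grow with \<open>\<epsilon>\<close>, so the infimum of their combination is the combination of the infima.\<close>

lemma matrix_norm_nonneg:
  assumes "is_matrix_norm N"
  shows "0 \<le> N M"
proof -
  have "N (M + (-1) *\<^sub>R M) \<le> N M + N ((-1) *\<^sub>R M)"
    and "N ((-1) *\<^sub>R M) = \<bar>-1\<bar> * N M" and "N 0 = 0"
    using assms unfolding is_matrix_norm_def by blast+
  then show ?thesis by simp
qed

lemma matrix_norm_minus_commute:
  assumes "is_matrix_norm N"
  shows "N (A - B) = N (B - A)"
proof -
  have "N ((-1) *\<^sub>R (B - A)) = \<bar>-1\<bar> * N (B - A)"
    using assms unfolding is_matrix_norm_def by blast
  then show ?thesis by simp
qed

lemma frob_inner_scaleR_right: "frob_inner U (c *\<^sub>R M) = c * frob_inner U M"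
  by (simp add: frob_inner_def sum_distrib_left mult_ac)

lemma frob_inner_minus_right: "frob_inner U (A - B) = - frob_inner U (B - A)"
  by (simp add: frob_inner_def sum_negf[symmetric] algebra_simps)

lemma frob_inner_le_dual_norm:
  assumes "is_matrix_norm N"
  shows "ereal (frob_inner U M) \<le> dual_norm N U * ereal (N M)"
proof (cases "M = 0")
  case True
  moreover have "N 0 = 0" using assms unfolding is_matrix_norm_def by blast
  ultimately show ?thesis by (simp add: frob_inner_def zero_ereal_def[symmetric])
next
  case False
  then have pos: "N M > 0"
    using assms matrix_norm_nonneg[OF assms, of M] unfolding is_matrix_norm_def
    by (metis order_le_less)
  let ?W = "(1 / N M) *\<^sub>R M"
  have "N ?W = \<bar>1 / N M\<bar> * N M" using assms unfolding is_matrix_norm_def by blast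
  then have "N ?W = 1" using pos by simp
  then have "ereal (frob_inner U ?W) \<le> dual_norm N U"
    unfolding dual_norm_def by (intro SUP_upper) auto
  then have "ereal (frob_inner U ?W) * ereal (N M) \<le> dual_norm N U * ereal (N M)"
    using pos by (intro ereal_mult_right_mono) auto
  moreover have "frob_inner U ?W * N M = frob_inner U M"
    using pos by (simp add: frob_inner_scaleR_right)
  ultimately show ?thesis by simp
qed

lemma dual_norm_nonneg:
  assumes "is_matrix_norm N"
  shows "0 \<le> dual_norm N U"
proof -
  have "N 0 = 0" using assms unfolding is_matrix_norm_def by blast
  then have "ereal (frob_inner U 0) \<le> dual_norm N U"
    unfolding dual_norm_def by (intro SUP_upper) auto
  then show ?thesis by (simp add: frob_inner_def zero_ereal_def)
qed

lemma norm_matrix_vector_mult_le_norm_1to2: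
  fixes M :: "real^'d^'m"
  shows "norm (M *v a) \<le> norm_1to2 M * l1norm a"
proof -
  have column_le: "norm (column j M) \<le> norm_1to2 M" for j
    unfolding norm_1to2_def by (rule Max_ge) auto
  have "norm (M *v a) = norm (\<Sum>j\<in>UNIV. a $ j *\<^sub>R column j M)"
    by (simp add: matrix_mult_sum scalar_mult_eq_scaleR)
  also have "\<dots> \<le> (\<Sum>j\<in>UNIV. \<bar>a $ j\<bar> * norm_1to2 M)"
    by (rule order_trans[OF norm_sum sum_mono]) (simp add: column_le mult_left_mono)
  also have "\<dots> = norm_1to2 M * l1norm a"
    by (simp add: l1norm_def sum_distrib_left mult_ac)
  finally show ?thesis .
qed

lemma column_diff_matrix_mult: "column i (X - D ** A) = column i X - D *v column i A"
  by (simp add: column_def vec_eq_iff matrix_matrix_mult_def matrix_vector_mult_def)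

lemma sum_inner_columns_eq_frob_inner:
  fixes R :: "real^'n^'m" and A :: "real^'n^'d" and M :: "real^'d^'m"
  shows "(\<Sum>i\<in>UNIV. column i R \<bullet> (M *v column i A)) = frob_inner (R ** transpose A) M"
proof -
  have "(\<Sum>i\<in>UNIV. column i R \<bullet> (M *v column i A))
      = (\<Sum>i\<in>UNIV. \<Sum>k\<in>UNIV. \<Sum>j\<in>UNIV. R$k$i * A$j$i * M$k$j)"
    by (simp add: inner_vec_def matrix_vector_mult_def column_def sum_distrib_left mult_ac)
  also have "\<dots> = (\<Sum>k\<in>UNIV. \<Sum>j\<in>UNIV. \<Sum>i\<in>UNIV. R$k$i * A$j$i * M$k$j)"
    by (subst sum.swap) (rule sum.cong[OF refl], rule sum.swap)
  also have "\<dots> = frob_inner (R ** transpose A) M"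
    by (simp add: frob_inner_def matrix_matrix_mult_def transpose_def sum_distrib_right)
  finally show ?thesis .
qed

lemma f_loss_nonneg:
  assumes "is_penalty g"
  shows "0 \<le> f_loss g x D"
  unfolding f_loss_def lossL_def using assms unfolding is_penalty_def
  by (intro INF_greatest) simp

lemma f_loss_neq_infty:
  assumes "is_penalty g"
  shows "f_loss g x D \<noteq> \<infinity>"
proof -
  obtain a where "g a \<noteq> \<infinity>" using assms unfolding is_penalty_def by auto
  moreover have "f_loss g x D \<le> lossL g x D a" unfolding f_loss_def by (rule INF_lower) simp
  ultimately show ?thesis unfolding lossL_def by auto
qed

lemma ereal_real_f_loss:
  assumes "is_penalty g"
  shows "ereal (real_of_ereal (f_loss g x D)) = f_loss g x D"
  using f_loss_nonneg[OF assms, of x D] f_loss_neq_infty[OF assms, of x D]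
  by (cases "f_loss g x D") auto

lemma f_loss_le_perturbed:
  assumes pen: "is_penalty g"
    and approx: "lossL g x D a \<le> f_loss g x D + ereal e"
  shows "real_of_ereal (f_loss g x D') \<le> real_of_ereal (f_loss g x D) + e
     - (x - D *v a) \<bullet> ((D' - D) *v a) + 1/2 * (norm ((D' - D) *v a))\<^sup>2"
proof -
  have "g a \<noteq> \<infinity>"
    using approx f_loss_neq_infty[OF pen, of x D] unfolding lossL_def by auto
  then obtain G where G: "g a = ereal G"
    using pen unfolding is_penalty_def by (cases "g a") auto
  obtain F where F: "f_loss g x D = ereal F" by (metis ereal_real_f_loss[OF pen])
  obtain F' where F': "f_loss g x D' = ereal F'" by (metis ereal_real_f_loss[OF pen])
  have at_D: "1/2 * (norm (x - D *v a))\<^sup>2 + G \<le> F + e"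
    using approx unfolding lossL_def G F by simp
  have "f_loss g x D' \<le> lossL g x D' a" unfolding f_loss_def by (rule INF_lower) simp
  then have at_D': "F' \<le> 1/2 * (norm (x - D' *v a))\<^sup>2 + G"
    unfolding lossL_def G F' by simp
  have split: "x - D' *v a = (x - D *v a) - (D' - D) *v a"
    by (simp add: matrix_vector_mult_diff_rdistrib)
  have "(norm (x - D' *v a))\<^sup>2
      = (norm (x - D *v a))\<^sup>2 - 2 * ((x - D *v a) \<bullet> ((D' - D) *v a)) + (norm ((D' - D) *v a))\<^sup>2"
    unfolding split by (simp add: power2_norm_eq_inner inner_diff_left inner_diff_right inner_commute)
  with at_D at_D' show ?thesis unfolding F F' real_of_ereal.simps by linarith
qed

lemma F_loss_eq_ereal:
  fixes X :: "real^'n^'m"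
  assumes "is_penalty g"
  shows "F_loss g X D = ereal ((\<Sum>i\<in>UNIV. real_of_ereal (f_loss g (column i X) D)) / real CARD('n))"
proof -
  have "(\<Sum>i\<in>UNIV. f_loss g (column i X) D) = ereal (\<Sum>i\<in>UNIV. real_of_ereal (f_loss g (column i X) D))"
    by (simp add: ereal_real_f_loss[OF assms] sum_ereal[symmetric] del: sum_ereal)
  then show ?thesis unfolding F_loss_def by simp
qed

lemma approx_set_nonempty:
  assumes pen: "is_penalty g" and "\<epsilon> > 0"
  shows "approx_set g \<epsilon> X D \<noteq> {}"
proof -
  have "\<exists>a. lossL g (column i X) D a \<le> f_loss g (column i X) D + ereal \<epsilon>" for i
  proof -
    let ?f = "f_loss g (column i X) D"
    have "?f < ?f + ereal \<epsilon>"
      using f_loss_neq_infty[OF pen, of "column i X" D] f_loss_nonneg[OF pen, of "column i X" D]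
        \<open>\<epsilon> > 0\<close> by (cases ?f) auto
    then have "(INF a. lossL g (column i X) D a) < ?f + ereal \<epsilon>" unfolding f_loss_def .
    then show ?thesis by (auto simp: INF_less_iff intro: less_imp_le)
  qed
  then obtain h where h: "\<And>i. lossL g (column i X) D (h i) \<le> f_loss g (column i X) D + ereal \<epsilon>"
    by metis
  have "column i (\<chi> k i. h i $ k) = h i" for i by (simp add: column_def vec_eq_iff)
  then have "(\<chi> k i. h i $ k) \<in> approx_set g \<epsilon> X D" unfolding approx_set_def using h by simp
  then show ?thesis by blast
qed

lemma approx_set_mono: "\<epsilon> \<le> \<epsilon>' \<Longrightarrow> approx_set g \<epsilon> X D \<subseteq> approx_set g \<epsilon>' X D"
  unfolding approx_set_def
  by (auto intro: order_trans[OF _ add_left_mono[of "ereal \<epsilon>" "ereal \<epsilon>'"]])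

definition L_sup :: "(real^'d^'m \<Rightarrow> real) \<Rightarrow> (real^'d \<Rightarrow> ereal) \<Rightarrow> real^'n^'m \<Rightarrow> real^'d^'m \<Rightarrow> real \<Rightarrow> ereal"
  where "L_sup N g X D \<epsilon> = (SUP A\<in>approx_set g \<epsilon> X D.
      ereal (1 / real CARD('n)) * dual_norm N ((X - D ** A) ** transpose A))"

definition C_sup :: "real \<Rightarrow> (real^'d \<Rightarrow> ereal) \<Rightarrow> real^'n^'m \<Rightarrow> real^'d^'m \<Rightarrow> real \<Rightarrow> ereal"
  where "C_sup C g X D \<epsilon> = (SUP A\<in>(approx_set g \<epsilon> X D :: (real^'n^'d) set).
      ereal (C / (2 * real CARD('n)) * (\<Sum>i\<in>UNIV. (l1norm (column i A))\<^sup>2)))"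

lemma L_const_eq_INF_L_sup: "L_const N g X D = (INF \<epsilon>\<in>{0<..}. L_sup N g X D \<epsilon>)"
  unfolding L_const_def L_sup_def ..

lemma C_const_eq_INF_C_sup: "C_const C g X D = (INF \<epsilon>\<in>{0<..}. C_sup C g X D \<epsilon>)"
  unfolding C_const_def C_sup_def ..

lemma mono_on_SUP_approx_set:
  fixes h :: "real^'n^'d \<Rightarrow> 'a::complete_lattice"
  shows "mono_on S (\<lambda>\<epsilon>. SUP A\<in>approx_set g \<epsilon> X D. h A)"
  by (intro mono_onI SUP_subset_mono approx_set_mono) auto

lemma mono_on_L_sup: "mono_on S (L_sup N g X D)"
  unfolding L_sup_def by (rule mono_on_SUP_approx_set)

lemma mono_on_C_sup: "mono_on S (C_sup C g X D)"
  unfolding C_sup_def by (rule mono_on_SUP_approx_set)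

lemma SUP_approx_set_nonneg:
  fixes h :: "real^'n^'d \<Rightarrow> ereal"
  assumes "is_penalty g" and "\<epsilon> > 0" and "\<And>A. 0 \<le> h A"
  shows "0 \<le> (SUP A\<in>approx_set g \<epsilon> X D. h A)"
proof -
  obtain A where "A \<in> approx_set g \<epsilon> X D" using approx_set_nonempty[OF assms(1,2)] by blast
  then show ?thesis using assms(3) by (rule SUP_upper2)
qed

lemma L_sup_nonneg:
  assumes "is_matrix_norm N" and "is_penalty g" and "\<epsilon> > 0"
  shows "0 \<le> L_sup N g X D \<epsilon>"
  unfolding L_sup_def using assms dual_norm_nonneg[OF assms(1)]
  by (intro SUP_approx_set_nonneg) auto

lemma C_sup_nonneg:
  assumes "is_penalty g" and "0 \<le> C" and "\<epsilon> > 0"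
  shows "0 \<le> C_sup C g X D \<epsilon>"
  unfolding C_sup_def using assms by (intro SUP_approx_set_nonneg) (auto simp: sum_nonneg)

lemma sum_f_loss_le_approx:
  fixes X :: "real^'n^'m" and A :: "real^'n^'d" and N :: "real^'d^'m \<Rightarrow> real"
  assumes pen: "is_penalty g"
    and bound: "\<forall>\<Delta>::real^'d^'m. (norm_1to2 \<Delta>)\<^sup>2 \<le> C * (N \<Delta>)\<^sup>2"
    and A: "A \<in> approx_set g \<epsilon> X D"
  shows "(\<Sum>i\<in>UNIV. real_of_ereal (f_loss g (column i X) D'))
    \<le> (\<Sum>i\<in>UNIV. real_of_ereal (f_loss g (column i X) D)) + real CARD('n) * \<epsilon>
      + frob_inner ((X - D ** A) ** transpose A) (D - D')
      + C / 2 * (N (D' - D))\<^sup>2 * (\<Sum>i\<in>UNIV. (l1norm (column i A))\<^sup>2)"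
proof -
  let ?\<Delta> = "D' - D"
  have column: "real_of_ereal (f_loss g (column i X) D') \<le> real_of_ereal (f_loss g (column i X) D) + \<epsilon>
     - column i (X - D ** A) \<bullet> (?\<Delta> *v column i A) + C / 2 * (N ?\<Delta>)\<^sup>2 * (l1norm (column i A))\<^sup>2" for i
  proof -
    have "(norm (?\<Delta> *v column i A))\<^sup>2 \<le> (norm_1to2 ?\<Delta> * l1norm (column i A))\<^sup>2"
      by (rule power_mono[OF norm_matrix_vector_mult_le_norm_1to2]) simp
    also have "\<dots> = (norm_1to2 ?\<Delta>)\<^sup>2 * (l1norm (column i A))\<^sup>2" by (simp add: power_mult_distrib)
    also have "\<dots> \<le> C * (N ?\<Delta>)\<^sup>2 * (l1norm (column i A))\<^sup>2"
      using bound by (intro mult_right_mono) auto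
    finally have "(norm (?\<Delta> *v column i A))\<^sup>2 \<le> C * (N ?\<Delta>)\<^sup>2 * (l1norm (column i A))\<^sup>2" .
    moreover have "real_of_ereal (f_loss g (column i X) D') \<le> real_of_ereal (f_loss g (column i X) D)
      + \<epsilon> - column i (X - D ** A) \<bullet> (?\<Delta> *v column i A) + 1/2 * (norm (?\<Delta> *v column i A))\<^sup>2"
      unfolding column_diff_matrix_mult
      by (rule f_loss_le_perturbed[OF pen]) (use A in \<open>simp add: approx_set_def\<close>)
    ultimately show ?thesis by linarith
  qed
  have "(\<Sum>i\<in>UNIV. real_of_ereal (f_loss g (column i X) D'))
    \<le> (\<Sum>i\<in>UNIV. real_of_ereal (f_loss g (column i X) D) + \<epsilon>
       - column i (X - D ** A) \<bullet> (?\<Delta> *v column i A) + C / 2 * (N ?\<Delta>)\<^sup>2 * (l1norm (column i A))\<^sup>2)"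
    by (rule sum_mono[OF column])
  also have "\<dots> = (\<Sum>i\<in>UNIV. real_of_ereal (f_loss g (column i X) D)) + real CARD('n) * \<epsilon>
      + frob_inner ((X - D ** A) ** transpose A) (D - D')
      + C / 2 * (N (D' - D))\<^sup>2 * (\<Sum>i\<in>UNIV. (l1norm (column i A))\<^sup>2)"
    by (simp add: sum.distrib sum_subtractf sum_distrib_left sum_inner_columns_eq_frob_inner
        frob_inner_minus_right[of _ D' D])
  finally show ?thesis .
qed

lemma F_loss_le_approx:
  fixes X :: "real^'n^'m" and A :: "real^'n^'d" and N :: "real^'d^'m \<Rightarrow> real"
  assumes N: "is_matrix_norm N"
    and pen: "is_penalty g"
    and bound: "\<forall>\<Delta>::real^'d^'m. (norm_1to2 \<Delta>)\<^sup>2 \<le> C * (N \<Delta>)\<^sup>2"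
    and A: "A \<in> approx_set g \<epsilon> X D"
  shows "F_loss g X D' \<le> F_loss g X D + (ereal \<epsilon>
     + ereal (1 / real CARD('n)) * dual_norm N ((X - D ** A) ** transpose A) * ereal (N (D' - D))
     + ereal (C / (2 * real CARD('n)) * (\<Sum>i\<in>UNIV. (l1norm (column i A))\<^sup>2)) * ereal ((N (D' - D))\<^sup>2))"
proof -
  let ?n = "real CARD('n)"
  have n_pos: "?n > 0" by simp
  let ?U = "(X - D ** A) ** transpose A"
  let ?sum = "\<lambda>D. \<Sum>i\<in>UNIV. real_of_ereal (f_loss g (column i X) D)"
  let ?Q = "\<Sum>i\<in>UNIV. (l1norm (column i A))\<^sup>2"
  have "?sum D' / ?n \<le> (?sum D + ?n * \<epsilon> + frob_inner ?U (D - D') + C / 2 * (N (D' - D))\<^sup>2 * ?Q) / ?n"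
    using sum_f_loss_le_approx[OF pen bound A] by (rule divide_right_mono) simp
  also have "\<dots> = ?sum D / ?n + (\<epsilon> + frob_inner ?U (D - D') / ?n + C / (2 * ?n) * ?Q * (N (D' - D))\<^sup>2)"
    using n_pos by (simp add: field_simps)
  finally have F_bound: "F_loss g X D' \<le> F_loss g X D
      + (ereal \<epsilon> + ereal (frob_inner ?U (D - D') / ?n) + ereal (C / (2 * ?n) * ?Q) * ereal ((N (D' - D))\<^sup>2))"
    unfolding F_loss_eq_ereal[OF pen] by simp
  have "ereal (frob_inner ?U (D - D') / ?n) = ereal (1 / ?n) * ereal (frob_inner ?U (D - D'))"
    by simp
  also have "\<dots> \<le> ereal (1 / ?n) * (dual_norm N ?U * ereal (N (D' - D)))"
    unfolding matrix_norm_minus_commute[OF N, of D' D]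
    by (rule ereal_mult_left_mono[OF frob_inner_le_dual_norm[OF N]]) simp
  finally have "ereal (frob_inner ?U (D - D') / ?n) \<le> ereal (1 / ?n) * dual_norm N ?U * ereal (N (D' - D))"
    by (simp add: mult.assoc)
  then have "F_loss g X D
      + (ereal \<epsilon> + ereal (frob_inner ?U (D - D') / ?n) + ereal (C / (2 * ?n) * ?Q) * ereal ((N (D' - D))\<^sup>2))
    \<le> F_loss g X D + (ereal \<epsilon> + ereal (1 / ?n) * dual_norm N ?U * ereal (N (D' - D))
      + ereal (C / (2 * ?n) * ?Q) * ereal ((N (D' - D))\<^sup>2))"
    by (intro add_mono order_refl)
  with F_bound show ?thesis by (rule order_trans)
qed

lemma F_loss_le_sup:
  fixes X :: "real^'n^'m" and N :: "real^'d^'m \<Rightarrow> real"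
  assumes N: "is_matrix_norm N"
    and pen: "is_penalty g"
    and bound: "\<forall>\<Delta>::real^'d^'m. (norm_1to2 \<Delta>)\<^sup>2 \<le> C * (N \<Delta>)\<^sup>2"
    and "\<epsilon> > 0"
  shows "F_loss g X D' \<le> F_loss g X D + (ereal \<epsilon>
     + L_sup N g X D \<epsilon> * ereal (N (D' - D)) + C_sup C g X D \<epsilon> * ereal ((N (D' - D))\<^sup>2))"
proof -
  obtain A where A: "A \<in> approx_set g \<epsilon> X D"
    using approx_set_nonempty[OF pen \<open>\<epsilon> > 0\<close>] by blast
  note F_loss_le_approx[OF N pen bound A, of D']
  also have "F_loss g X D + (ereal \<epsilon>
     + ereal (1 / real CARD('n)) * dual_norm N ((X - D ** A) ** transpose A) * ereal (N (D' - D))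
     + ereal (C / (2 * real CARD('n)) * (\<Sum>i\<in>UNIV. (l1norm (column i A))\<^sup>2)) * ereal ((N (D' - D))\<^sup>2))
    \<le> F_loss g X D + (ereal \<epsilon>
     + L_sup N g X D \<epsilon> * ereal (N (D' - D)) + C_sup C g X D \<epsilon> * ereal ((N (D' - D))\<^sup>2))"
    unfolding L_sup_def C_sup_def using matrix_norm_nonneg[OF N]
    by (intro add_left_mono add_mono order_refl ereal_mult_right_mono SUP_upper A) simp_all
  finally show ?thesis .
qed

lemma INF_ereal_mult_right:
  fixes f :: "'a \<Rightarrow> ereal"
  assumes "I \<noteq> {}" and "0 \<le> c"
  shows "(INF i\<in>I. f i * ereal c) = (INF i\<in>I. f i) * ereal c"
proof -
  have "continuous_on UNIV (\<lambda>x. x * ereal c)"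
    using tendsto_cmult_ereal[of "ereal c" "\<lambda>x. x"] by (force simp: continuous_on_def mult_ac)
  then show ?thesis
    by (subst continuous_at_Inf_mono[where f="\<lambda>x. x * ereal c"])
       (auto simp: mono_def continuous_on_eq_continuous_within assms image_comp
         continuous_at_imp_continuous_at_within intro!: ereal_mult_right_mono)
qed

lemma INF_ereal_greaterThan_0: "(INF \<epsilon>\<in>{0::real<..}. ereal \<epsilon>) = 0"
  by (metis bdd_below_Ioi cInf_greaterThan ereal_Inf' greaterThan_non_empty zero_ereal_def)

lemma INF_ereal_add_mono_on:
  fixes f g :: "real \<Rightarrow> ereal"
  assumes "mono_on {0<..} f" "mono_on {0<..} g"
    and "\<And>\<epsilon>. \<epsilon> > 0 \<Longrightarrow> 0 \<le> f \<epsilon>" "\<And>\<epsilon>. \<epsilon> > 0 \<Longrightarrow> 0 \<le> g \<epsilon>"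
  shows "(INF \<epsilon>\<in>{0<..}. f \<epsilon> + g \<epsilon>) = (INF \<epsilon>\<in>{0<..}. f \<epsilon>) + (INF \<epsilon>\<in>{0<..}. g \<epsilon>)"
proof (rule INF_ereal_add_directed)
  fix i j :: real assume "i \<in> {0<..}" "j \<in> {0<..}"
  then show "\<exists>k\<in>{0<..}. f k + g k \<le> f i + g j"
    using assms(1,2) by (intro bexI[of _ "min i j"] add_mono) (auto intro: mono_onD)
qed (use assms in auto)

lemma le_add_INF_of_mono_on:
  fixes a b :: "real \<Rightarrow> ereal" and x y :: ereal
  assumes mono: "mono_on {0<..} a" "mono_on {0<..} b"
    and nonneg: "\<And>\<epsilon>. \<epsilon> > 0 \<Longrightarrow> 0 \<le> a \<epsilon>" "\<And>\<epsilon>. \<epsilon> > 0 \<Longrightarrow> 0 \<le> b \<epsilon>"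
    and "0 \<le> s" "0 \<le> t" "x \<noteq> -\<infinity>"
    and le: "\<And>\<epsilon>. \<epsilon> > 0 \<Longrightarrow> y \<le> x + (ereal \<epsilon> + a \<epsilon> * ereal s + b \<epsilon> * ereal t)"
  shows "y \<le> x + (INF \<epsilon>\<in>{0<..}. a \<epsilon>) * ereal s + (INF \<epsilon>\<in>{0<..}. b \<epsilon>) * ereal t"
proof -
  have mono_scaled: "mono_on {0<..} (\<lambda>\<epsilon>. c \<epsilon> * ereal r)"
    if "mono_on {0<..} c" "0 \<le> r" for c :: "real \<Rightarrow> ereal" and r :: real
    using that by (auto intro!: mono_onI ereal_mult_right_mono dest: mono_onD)
  have mono_eps: "mono_on {0<..} (\<lambda>\<epsilon>. ereal \<epsilon> + a \<epsilon> * ereal s)"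
    using mono_scaled[OF mono(1) \<open>0 \<le> s\<close>] by (auto intro!: mono_onI add_mono dest: mono_onD)
  have nonneg_a: "0 \<le> a \<epsilon> * ereal s" and nonneg_b: "0 \<le> b \<epsilon> * ereal t" if "\<epsilon> > 0" for \<epsilon>
    using nonneg[OF that] \<open>0 \<le> s\<close> \<open>0 \<le> t\<close> by simp_all
  have "y \<le> (INF \<epsilon>\<in>{0<..}. x + (ereal \<epsilon> + a \<epsilon> * ereal s + b \<epsilon> * ereal t))"
    using le by (intro INF_greatest) auto
  also have "\<dots> = x + (INF \<epsilon>\<in>{0<..}. ereal \<epsilon> + a \<epsilon> * ereal s + b \<epsilon> * ereal t)"
    using nonneg_a nonneg_b \<open>x \<noteq> -\<infinity>\<close> by (intro INF_ereal_add_right) auto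
  also have "(INF \<epsilon>\<in>{0<..}. ereal \<epsilon> + a \<epsilon> * ereal s + b \<epsilon> * ereal t)
      = (INF \<epsilon>\<in>{0<..}. ereal \<epsilon> + a \<epsilon> * ereal s) + (INF \<epsilon>\<in>{0<..}. b \<epsilon> * ereal t)"
    using nonneg_a nonneg_b
    by (intro INF_ereal_add_mono_on mono_eps mono_scaled mono(2) \<open>0 \<le> t\<close>) auto
  also have "(INF \<epsilon>\<in>{0<..}. ereal \<epsilon> + a \<epsilon> * ereal s)
      = (INF \<epsilon>\<in>{0<..}. ereal \<epsilon>) + (INF \<epsilon>\<in>{0<..}. a \<epsilon> * ereal s)"
    using nonneg_a
    by (intro INF_ereal_add_mono_on mono_scaled mono(1) \<open>0 \<le> s\<close>) (auto intro: mono_onI)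
  finally show ?thesis
    by (simp add: INF_ereal_greaterThan_0 INF_ereal_mult_right \<open>0 \<le> s\<close> \<open>0 \<le> t\<close> add.assoc)
qed

theorem mainTheorem3:
  fixes N :: "real^'d^'m \<Rightarrow> real"
    and g :: "real^'d \<Rightarrow> ereal"
    and C :: real
    and X :: "real^'n^'m"
    and D :: "real^'d^'m"
  assumes "is_matrix_norm N"
    and "is_penalty g"
    and "C > 0"
    and "\<forall>\<Delta>::real^'d^'m. (norm_1to2 \<Delta>)\<^sup>2 \<le> C * (N \<Delta>)\<^sup>2"
  shows "(\<forall>\<epsilon>>0. approx_set g \<epsilon> X D \<noteq> {}) \<and>
         (\<forall>D'::real^'d^'m. F_loss g X D' \<le> F_loss g X D + L_const N g X D * ereal (N (D' - D))
              + C_const C g X D * ereal ((N (D' - D))\<^sup>2))"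
proof (intro conjI allI impI)
  note N = assms(1) and pen = assms(2) and bound = assms(4)
  show "approx_set g \<epsilon> X D \<noteq> {}" if "\<epsilon> > 0" for \<epsilon>
    using approx_set_nonempty[OF pen that] .
  have "0 \<le> C" using \<open>C > 0\<close> by simp
  have "F_loss g X D \<noteq> -\<infinity>" by (simp add: F_loss_eq_ereal[OF pen])
  show "F_loss g X D' \<le> F_loss g X D + L_const N g X D * ereal (N (D' - D))
          + C_const C g X D * ereal ((N (D' - D))\<^sup>2)" for D'
    unfolding L_const_eq_INF_L_sup C_const_eq_INF_C_sup
    by (rule le_add_INF_of_mono_on[OF mono_on_L_sup mono_on_C_sup L_sup_nonneg[OF N pen]
          C_sup_nonneg[OF pen \<open>0 \<le> C\<close>] matrix_norm_nonneg[OF N] zero_le_power2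
          \<open>F_loss g X D \<noteq> -\<infinity>\<close> F_loss_le_sup[OF N pen bound]])
qed

end
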